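(* Let $N\ge1$, $n,m\ge1$, $\kappa>0$, and let $\{(U_i,V_i)\}_{i=1}^N$ be a solution of $$\dot U_j=\frac{\kappa}{N}\sum_{k=1}^N\big(\langle V_j,V_k\rangle_FU_k-\langle V_k,V_j\rangle_FU_jU_k^\dagger U_j\big),\qquad \dot V_j=\frac{\kappa}{N}\sum_{k=1}^N\big(\langle U_j,U_k\rangle_FV_k-\langle U_k,U_j\rangle_FV_jV_k^\dagger V_j\big),$$ with $(U_j,V_j)(0)\in\mathbf U(n)\times\mathbf U(m)$. Then $\mathcal E(U,V):=1-\frac1{N^2}\sum_{i,j=1}^N\langle U_i,U_j\rangle_F\langle V_i,V_j\rangle_F$ satisfies, for $t>0$, $$\frac{d}{dt}\mathcal E(U,V)=-\frac{1}{\kappa N}\sum_{j=1}^N\big(\|\dot U_j\|_F^2+\|\dot V_j\|_F^2\big).$$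
   Context: $\langle A,B\rangle_F=\mathrm{tr}(A^\dagger B)$, $\|A\|_F=\sqrt{\langle A,A\rangle_F}$; $\mathbf U(n)$ denotes the unitary group. *)

theory Defs
  imports "HOL-Analysis.Analysis"
begin

definition adj :: "complex^'n^'n \<Rightarrow> complex^'n^'n" where
  "adj A = (\<chi> i j. cnj (A $ j $ i))"

definition mtrace :: "complex^'n^'n \<Rightarrow> complex" where
  "mtrace A = (\<Sum>i\<in>UNIV. A $ i $ i)"

definition frob_inner :: "complex^'n^'n \<Rightarrow> complex^'n^'n \<Rightarrow> complex" where
  "frob_inner A B = mtrace (adj A ** B)"

text \<open>Frobenius norm sqrt(<A,A>_F) (the inner product is real and nonnegative).\<close>
definition frob_norm :: "complex^'n^'n \<Rightarrow> real" where
  "frob_norm A = sqrt (Re (frob_inner A A))"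

definition csmult :: "complex \<Rightarrow> complex^'n^'n \<Rightarrow> complex^'n^'n" where
  "csmult c A = (\<chi> i j. c * A $ i $ j)"

definition unitary :: "complex^'n^'n \<Rightarrow> bool" where
  "unitary A \<longleftrightarrow> adj A ** A = mat 1 \<and> A ** adj A = mat 1"

definition energy :: "nat \<Rightarrow> (nat \<Rightarrow> complex^'n^'n) \<Rightarrow> (nat \<Rightarrow> complex^'m^'m) \<Rightarrow> complex" where
  "energy N U V = 1 - (1 / of_nat N ^ 2) *
     (\<Sum>i=1..N. \<Sum>j=1..N. frob_inner (U i) (U j) * frob_inner (V i) (V j))"

end

theory Submission
  imports Defs
begin

(*
  With c = kappa / N and W_j = sum_k <V_j,V_k> U_k, the equation for U reads
  U_j' = c P_{U_j}(W_j), where P_U(W) = W - U W^dagger U (tangent_part U W) is, for unitary U,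
  twice the orthogonal projection of W onto the tangent space of U(n) at U; symmetrically for V.
  Unitarity is preserved: Q = U^dagger U - I satisfies the linear equation
  Q' = -c (X Q + Q X^dagger) with X = U^dagger W and Q(0) = 0, so Q = 0 by Gronwall.
  Hence 2 Re <W_j, U_j'> = |U_j'|^2 / c. Differentiating sum_ij <U_i,U_j><V_i,V_j> and using
  that the coefficient matrix (<V_j,V_k>) is Hermitian, the terms coming from U' sum to
  sum_j 2 Re <W_j, U_j'>; likewise for V.
*)

lemma adj_nth [simp]: "adj A $ i $ j = cnj (A $ j $ i)"
  by (simp add: adj_def)

lemma csmult_nth [simp]: "csmult c A $ i $ j = c * A $ i $ j"
  by (simp add: csmult_def)

lemma frob_inner_eq_trace: "frob_inner A B = trace (adj A ** B)"
  by (simp add: frob_inner_def mtrace_def trace_def)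

lemma frob_inner_entries:
  "frob_inner A B = (\<Sum>i\<in>UNIV. \<Sum>k\<in>UNIV. cnj (A $ k $ i) * B $ k $ i)"
  by (simp add: frob_inner_def mtrace_def matrix_matrix_mult_def)

lemma linear_adj: "linear (adj :: complex^'n^'n \<Rightarrow> complex^'n^'n)"
  by (auto intro!: linearI simp: vec_eq_iff)

lemmas bounded_linear_adj = linear_adj[unfolded linear_conv_bounded_linear]
  and adj_diff = linear_diff[OF linear_adj]
  and adj_sum = linear_sum[OF linear_adj]
  and adj_scaleR = linear_scale[OF linear_adj]

interpretation matrix_mult: bounded_bilinear
  "(**) :: complex^'n^'n \<Rightarrow> complex^'n^'n \<Rightarrow> complex^'n^'n"
  unfolding bilinear_conv_bounded_bilinear[symmetric] bilinear_def
  by (auto intro!: linearI simp: matrix_add_ldistrib scalar_matrix_assoc matrix_scalar_ac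
      vec_eq_iff matrix_matrix_mult_def algebra_simps sum.distrib scaleR_sum_right)

interpretation csmult: bounded_bilinear "csmult :: complex \<Rightarrow> complex^'n^'n \<Rightarrow> complex^'n^'n"
  unfolding bilinear_conv_bounded_bilinear[symmetric] bilinear_def
  by (auto intro!: linearI simp: vec_eq_iff algebra_simps)

interpretation frob_inner: bounded_bilinear
  "frob_inner :: complex^'n^'n \<Rightarrow> complex^'n^'n \<Rightarrow> complex"
  unfolding bilinear_conv_bounded_bilinear[symmetric] bilinear_def
  by (auto intro!: linearI simp: frob_inner_entries algebra_simps sum.distrib scaleR_sum_right)

lemma adj_adj [simp]: "adj (adj A) = A"
  by (simp add: vec_eq_iff)

lemma adj_matrix_mult: "adj (A ** B) = adj B ** adj A"
  by (simp add: vec_eq_iff matrix_matrix_mult_def mult.commute)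

lemma adj_csmult: "adj (csmult c A) = csmult (cnj c) (adj A)"
  by (simp add: vec_eq_iff)

lemma csmult_of_real: "csmult (of_real r) A = r *\<^sub>R A"
  by (simp add: vec_eq_iff of_real_def)

lemma csmult_matrix_mult_left: "csmult c A ** B = csmult c (A ** B)"
  by (simp add: vec_eq_iff matrix_matrix_mult_def sum_distrib_left mult.assoc)

lemma csmult_matrix_mult_right: "A ** csmult c B = csmult c (A ** B)"
  by (simp add: vec_eq_iff matrix_matrix_mult_def sum_distrib_left algebra_simps)

lemma frob_inner_csmult_left: "frob_inner (csmult c A) B = cnj c * frob_inner A B"
  by (simp add: frob_inner_entries sum_distrib_left algebra_simps)

lemma cnj_frob_inner: "cnj (frob_inner A B) = frob_inner B A"
  by (simp add: frob_inner_entries mult.commute)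

lemma frob_inner_self: "frob_inner A A = of_real (norm A ^ 2)"
proof -
  have "frob_inner A A = (\<Sum>i\<in>UNIV. \<Sum>k\<in>UNIV. of_real (cmod (A $ k $ i) ^ 2))"
    by (simp add: frob_inner_entries complex_norm_square mult.commute del: of_real_power)
  also have "\<dots> = of_real (\<Sum>k\<in>UNIV. \<Sum>i\<in>UNIV. cmod (A $ k $ i) ^ 2)"
    by (subst sum.swap) simp
  finally show ?thesis
    by (simp add: norm_vec_def L2_set_def sum_nonneg)
qed

lemma frob_norm_eq_norm: "frob_norm A = norm A"
  by (simp add: frob_norm_def frob_inner_self)

lemma norm_adj: "norm (adj A) = norm A"
proof -
  have "of_real (norm (adj A) ^ 2) = frob_inner (adj A) (adj A)"
    by (rule frob_inner_self[symmetric])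
  also have "\<dots> = trace (A ** adj A)"
    by (simp add: frob_inner_eq_trace)
  also have "\<dots> = trace (adj A ** A)"
    by (rule trace_mul_sym)
  also have "\<dots> = frob_inner A A"
    by (simp add: frob_inner_eq_trace)
  also have "\<dots> = of_real (norm A ^ 2)"
    by (rule frob_inner_self)
  finally show ?thesis
    by (simp add: power2_eq_iff_nonneg del: of_real_power)
qed

definition tangent_part :: "complex^'n^'n \<Rightarrow> complex^'n^'n \<Rightarrow> complex^'n^'n" where
  "tangent_part U W = W - U ** adj W ** U"

lemma unitary_iff_adj_mult_self: "unitary U \<longleftrightarrow> adj U ** U = mat 1"
  unfolding unitary_def using matrix_left_right_inverse by blast

lemma two_Re_frob_inner_tangent_part:
  assumes "unitary U"
  shows "2 * Re (frob_inner W (tangent_part U W)) = norm (tangent_part U W) ^ 2"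
proof -
  have left: "adj U ** U = mat 1" and right: "U ** adj U = mat 1"
    using assms by (auto simp: unitary_def)
  define Y where "Y = U ** adj W ** U"
  have "adj Y ** Y = adj U ** W ** (adj U ** U) ** adj W ** U"
    by (simp add: Y_def adj_matrix_mult matrix_mul_assoc)
  also have "\<dots> = adj U ** (W ** adj W ** U)"
    by (simp only: left matrix_mul_rid matrix_mul_assoc)
  finally have "frob_inner Y Y = trace (adj U ** (W ** adj W ** U))"
    by (simp add: frob_inner_eq_trace)
  also have "\<dots> = trace (W ** adj W ** U ** adj U)"
    by (rule trace_mul_sym)
  also have "\<dots> = trace (W ** adj W ** (U ** adj U))"
    by (simp only: matrix_mul_assoc)
  also have "\<dots> = frob_inner W W"
    by (simp add: right frob_inner_eq_trace trace_mul_sym[of W])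
  finally have YY: "frob_inner Y Y = frob_inner W W" .
  have "of_real (norm (W - Y) ^ 2) = frob_inner (W - Y) (W - Y)"
    by (simp add: frob_inner_self)
  also have "\<dots> = frob_inner W (W - Y) + cnj (frob_inner W (W - Y))"
    using YY by (simp add: frob_inner.diff_left frob_inner.diff_right cnj_frob_inner)
  also have "\<dots> = of_real (2 * Re (frob_inner W (W - Y)))"
    by (simp add: complex_add_cnj)
  finally show ?thesis
    unfolding tangent_part_def Y_def[symmetric] by (metis Re_complex_of_real)
qed

text \<open>Gronwall's argument: \<open>norm (Q s) ^ 2 * exp (- 2 * M * s)\<close> is nonincreasing and vanishes
  at \<open>0\<close>.\<close>

lemma vanishes_if_derivative_linearly_bounded:
  fixes Q Q' :: "real \<Rightarrow> 'a::real_inner"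
  assumes T: "0 \<le> T"
    and dQ: "\<And>s. s \<in> {0..T} \<Longrightarrow> (Q has_vector_derivative Q' s) (at s within {0..T})"
    and bound: "\<And>s. s \<in> {0..T} \<Longrightarrow> norm (Q' s) \<le> M * norm (Q s)"
    and Q0: "Q 0 = 0"
  shows "Q T = 0"
proof -
  define f where "f s = inner (Q s) (Q s) * exp (- (2 * M) * s)" for s
  define f' where "f' s = (2 * inner (Q s) (Q' s) - 2 * M * inner (Q s) (Q s)) * exp (- (2 * M) * s)"
    for s
  have df: "(f has_real_derivative f' s) (at s within {0..T})" if "s \<in> {0..T}" for s
  proof -
    have "((\<lambda>s. inner (Q s) (Q s)) has_real_derivative 2 * inner (Q s) (Q' s)) (at s within {0..T})"
      using bounded_bilinear.has_vector_derivative[OF bounded_bilinear_inner dQ[OF that] dQ[OF that]]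
      by (simp add: has_real_derivative_iff_has_vector_derivative inner_commute)
    then show ?thesis
      unfolding f_def f'_def by (auto intro!: derivative_eq_intros simp: algebra_simps)
  qed
  have f'_nonpos: "f' s \<le> 0" if "s \<in> {0..T}" for s
  proof -
    have "inner (Q s) (Q' s) \<le> norm (Q s) * norm (Q' s)"
      by (rule norm_cauchy_schwarz)
    also have "\<dots> \<le> M * inner (Q s) (Q s)"
      using mult_left_mono[OF bound[OF that] norm_ge_zero[of "Q s"]]
      by (simp add: power2_eq_square algebra_simps flip: power2_norm_eq_inner)
    finally show ?thesis
      unfolding f'_def by (simp add: mult_nonpos_nonneg)
  qed
  obtain x where x: "x \<in> {0..T}" "f T - f 0 = f' x * (T - 0)"
    using mvt_very_simple[OF T, of f "\<lambda>x h. f' x * h"] df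
    by (force simp: has_field_derivative_def)
  have "f T \<le> 0"
    using x f'_nonpos[OF x(1)] T Q0 by (simp add: f_def mult_nonpos_nonneg)
  then have "inner (Q T) (Q T) \<le> 0"
    by (simp add: f_def mult_le_0_iff)
  then show ?thesis
    by (metis inner_ge_zero inner_eq_zero_iff order_antisym)
qed

lemma adj_mult_tangent_part_add:
  "adj U ** tangent_part U W + adj (tangent_part U W) ** U
    = - (adj U ** W ** (adj U ** U - mat 1) + (adj U ** U - mat 1) ** adj (adj U ** W))"
  by (simp add: tangent_part_def adj_diff adj_matrix_mult
      matrix_mult.diff_left matrix_mult.diff_right matrix_mul_assoc algebra_simps)

lemma unitary_invariant_tangent_flow:
  fixes U W :: "real \<Rightarrow> complex^'n^'n"
  assumes dU: "\<And>s. 0 \<le> s \<Longrightarrow>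
      (U has_vector_derivative c *\<^sub>R tangent_part (U s) (W s)) (at s within {0..})"
    and cW: "continuous_on {0..} W" and U0: "unitary (U 0)" and T: "0 \<le> T"
  shows "unitary (U T)"
proof -
  define Q where "Q s = adj (U s) ** U s - mat 1" for s
  define X where "X s = adj (U s) ** W s" for s
  define Q' where "Q' s = - c *\<^sub>R (X s ** Q s + Q s ** adj (X s))" for s
  have dQ: "(Q has_vector_derivative Q' s) (at s within {0..T})" if "s \<in> {0..T}" for s
  proof -
    have "((\<lambda>s. adj (U s) ** U s) has_vector_derivative Q' s) (at s within {0..})"
      using matrix_mult.has_vector_derivative
          [OF bounded_linear.has_vector_derivative[OF bounded_linear_adj dU] dU, of s] that
      by (simp add: adj_scaleR matrix_mult.scaleR_left matrix_mult.scaleR_right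
          adj_mult_tangent_part_add flip: scaleR_add_right)
        (simp add: Q'_def Q_def X_def scaleR_add_right scaleR_diff_right)
    then have "((\<lambda>s. adj (U s) ** U s) has_vector_derivative Q' s) (at s within {0..T})"
      by (rule has_vector_derivative_within_subset) auto
    then show ?thesis
      unfolding Q_def by (rule has_vector_derivative_diff_const[THEN iffD2])
  qed
  have "continuous_on {0..} U"
    by (rule continuous_on_vector_derivative, rule dU) simp
  then have "continuous_on {0..T} X"
    unfolding X_def using cW
    by (auto intro!: matrix_mult.continuous_on bounded_linear.continuous_on[OF bounded_linear_adj]
        intro: continuous_on_subset)
  then obtain B where B: "\<And>s. s \<in> {0..T} \<Longrightarrow> norm (X s) \<le> B"
    using compact_imp_bounded[OF compact_continuous_image[OF _ compact_Icc]]
    by (force simp: bounded_iff)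
  obtain K where K: "\<And>(A :: complex^'n^'n) (A' :: complex^'n^'n). norm (A ** A') \<le> norm A * norm A' * K"
    "K > 0"
    using matrix_mult.pos_bounded by blast
  have "norm (Q' s) \<le> (2 * \<bar>c\<bar> * K * B) * norm (Q s)" if "s \<in> {0..T}" for s
  proof -
    have "norm (X s) * norm (Q s) * K \<le> B * norm (Q s) * K"
      using B[OF that] K(2) by (intro mult_right_mono) auto
    then have "norm (X s ** Q s) \<le> B * norm (Q s) * K" "norm (Q s ** adj (X s)) \<le> B * norm (Q s) * K"
      using K(1)[of "X s" "Q s"] K(1)[of "Q s" "adj (X s)"]
      by (simp_all add: norm_adj mult.commute[of "norm (Q s)"])
    then have "norm (X s ** Q s + Q s ** adj (X s)) \<le> 2 * (B * norm (Q s) * K)"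
      by (smt (verit) norm_triangle_ineq)
    then have "\<bar>c\<bar> * norm (X s ** Q s + Q s ** adj (X s)) \<le> \<bar>c\<bar> * (2 * (B * norm (Q s) * K))"
      by (rule mult_left_mono) simp
    then show ?thesis
      by (simp add: Q'_def ac_simps)
  qed
  moreover have "Q 0 = 0"
    using U0 by (simp add: Q_def unitary_def)
  ultimately have "Q T = 0"
    using vanishes_if_derivative_linearly_bounded[OF T dQ] by blast
  then show ?thesis
    by (simp add: Q_def unitary_iff_adj_mult_self)
qed

lemma csmult_sum_eq_scaleR_tangent_part:
  "csmult (of_real c) (\<Sum>k\<in>S. csmult (a k) (B k) - csmult (cnj (a k)) (A ** adj (B k) ** A))
    = c *\<^sub>R tangent_part A (\<Sum>k\<in>S. csmult (a k) (B k))"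
  by (simp add: tangent_part_def csmult_of_real sum_subtractf adj_sum adj_csmult
      matrix_mult.sum_left matrix_mult.sum_right csmult_matrix_mult_left csmult_matrix_mult_right)

lemma double_sum_frob_inner_hermitian:
  assumes herm: "\<And>i j. a j i = cnj (a i j)"
  shows "(\<Sum>i\<in>S. \<Sum>j\<in>S. (frob_inner (A i) (A' j) + frob_inner (A' i) (A j)) * a i j)
    = of_real (\<Sum>j\<in>S. 2 * Re (frob_inner (\<Sum>k\<in>S. csmult (a j k) (A k)) (A' j)))"
proof -
  define z where "z = (\<Sum>i\<in>S. \<Sum>j\<in>S. frob_inner (A i) (A' j) * a i j)"
  have "(\<Sum>j\<in>S. frob_inner (\<Sum>k\<in>S. csmult (a j k) (A k)) (A' j))
      = (\<Sum>j\<in>S. \<Sum>k\<in>S. frob_inner (A k) (A' j) * a k j)"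
    by (simp add: frob_inner.sum_left frob_inner_csmult_left herm[symmetric] mult.commute)
  also have "\<dots> = z"
    unfolding z_def by (rule sum.swap)
  finally have z_eq: "z = (\<Sum>j\<in>S. frob_inner (\<Sum>k\<in>S. csmult (a j k) (A k)) (A' j))" ..
  have "cnj z = (\<Sum>i\<in>S. \<Sum>j\<in>S. frob_inner (A' j) (A i) * a j i)"
    unfolding z_def by (simp add: cnj_frob_inner herm[symmetric])
  also have "\<dots> = (\<Sum>i\<in>S. \<Sum>j\<in>S. frob_inner (A' i) (A j) * a i j)"
    by (rule sum.swap)
  finally have cnj_z: "cnj z = (\<Sum>i\<in>S. \<Sum>j\<in>S. frob_inner (A' i) (A j) * a i j)" .
  have "(\<Sum>i\<in>S. \<Sum>j\<in>S. (frob_inner (A i) (A' j) + frob_inner (A' i) (A j)) * a i j)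
      = z + cnj z"
    unfolding cnj_z by (simp add: z_def distrib_right sum.distrib)
  also have "\<dots> = of_real (2 * Re z)"
    by (simp add: complex_add_cnj)
  finally show ?thesis
    by (simp add: z_eq sum_distrib_left)
qed

lemma sum_frob_inner_derivative_tangent_flow:
  fixes U U' :: "'i \<Rightarrow> real \<Rightarrow> complex^'n^'n" and a :: "real \<Rightarrow> 'i \<Rightarrow> 'i \<Rightarrow> complex"
  assumes c: "c > 0"
    and herm: "\<And>s i j. a s j i = cnj (a s i j)"
    and cont: "\<And>i j. i \<in> S \<Longrightarrow> j \<in> S \<Longrightarrow> continuous_on {0..} (\<lambda>s. a s i j)"
    and dU: "\<And>j s. j \<in> S \<Longrightarrow> 0 \<le> s \<Longrightarrow> (U j has_vector_derivative U' j s) (at s within {0..})"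
    and eqU: "\<And>j s. j \<in> S \<Longrightarrow> 0 \<le> s \<Longrightarrow> U' j s = csmult (of_real c)
        (\<Sum>k\<in>S. csmult (a s j k) (U k s) - csmult (a s k j) (U j s ** adj (U k s) ** U j s))"
    and init: "\<And>j. j \<in> S \<Longrightarrow> unitary (U j 0)"
    and t: "0 \<le> t"
  shows "(\<Sum>i\<in>S. \<Sum>j\<in>S. (frob_inner (U i t) (U' j t) + frob_inner (U' i t) (U j t)) * a t i j)
    = of_real ((\<Sum>j\<in>S. norm (U' j t) ^ 2) / c)"
proof -
  define W where "W j s = (\<Sum>k\<in>S. csmult (a s j k) (U k s))" for j s
  have U'_eq: "U' j s = c *\<^sub>R tangent_part (U j s) (W j s)" if "j \<in> S" "0 \<le> s" for j s
    using eqU[OF that] by (simp add: herm[where i = j] W_def csmult_sum_eq_scaleR_tangent_part)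
  have "continuous_on {0..} (U k)" if "k \<in> S" for k
    by (rule continuous_on_vector_derivative, rule dU[OF that]) simp
  then have cW: "continuous_on {0..} (W j)" if "j \<in> S" for j
    unfolding W_def using cont[OF that] by (auto intro!: continuous_on_sum csmult.continuous_on)
  have unitary_t: "unitary (U j t)" if j: "j \<in> S" for j
  proof (rule unitary_invariant_tangent_flow[where W = "W j" and c = c])
    show "(U j has_vector_derivative c *\<^sub>R tangent_part (U j s) (W j s)) (at s within {0..})"
      if "0 \<le> s" for s
      using dU[OF j that] U'_eq[OF j that] by simp
  qed (use cW[OF j] init[OF j] t in auto)
  have "2 * Re (frob_inner (W j t) (U' j t)) = norm (U' j t) ^ 2 / c" if j: "j \<in> S" for j
  proof -
    have "2 * Re (frob_inner (W j t) (U' j t))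
        = c * (2 * Re (frob_inner (W j t) (tangent_part (U j t) (W j t))))"
      by (simp add: U'_eq[OF j t] frob_inner.scaleR_right)
    also have "\<dots> = c * norm (tangent_part (U j t) (W j t)) ^ 2"
      using two_Re_frob_inner_tangent_part[OF unitary_t[OF j]] by simp
    also have "\<dots> = norm (U' j t) ^ 2 / c"
      using c by (simp add: U'_eq[OF j t] power2_eq_square)
    finally show ?thesis .
  qed
  moreover have "(\<Sum>i\<in>S. \<Sum>j\<in>S. (frob_inner (U i t) (U' j t) + frob_inner (U' i t) (U j t)) * a t i j)
      = of_real (\<Sum>j\<in>S. 2 * Re (frob_inner (W j t) (U' j t)))"
    unfolding W_def by (rule double_sum_frob_inner_hermitian) (rule herm)
  ultimately show ?thesis
    by (simp add: sum_divide_distrib)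
qed

lemma energy_has_vector_derivative:
  fixes U :: "nat \<Rightarrow> real \<Rightarrow> complex^'n^'n" and V :: "nat \<Rightarrow> real \<Rightarrow> complex^'m^'m"
  assumes dU: "\<And>j. j \<in> {1..N} \<Longrightarrow> (U j has_vector_derivative U' j) (at t within S)"
    and dV: "\<And>j. j \<in> {1..N} \<Longrightarrow> (V j has_vector_derivative V' j) (at t within S)"
  shows "((\<lambda>s. energy N (\<lambda>i. U i s) (\<lambda>i. V i s)) has_vector_derivative
      - (1 / of_nat N ^ 2) * (\<Sum>i=1..N. \<Sum>j=1..N.
          (frob_inner (U i t) (U' j) + frob_inner (U' i) (U j t)) * frob_inner (V i t) (V j t)
        + (frob_inner (V i t) (V' j) + frob_inner (V' i) (V j t)) * frob_inner (U i t) (U j t)))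
      (at t within S)"
proof -
  define D where "D i j =
      (frob_inner (U i t) (U' j) + frob_inner (U' i) (U j t)) * frob_inner (V i t) (V j t)
    + (frob_inner (V i t) (V' j) + frob_inner (V' i) (V j t)) * frob_inner (U i t) (U j t)" for i j
  have "((\<lambda>s. frob_inner (U i s) (U j s) * frob_inner (V i s) (V j s)) has_vector_derivative D i j)
      (at t within S)" if "i \<in> {1..N}" "j \<in> {1..N}" for i j
    by (rule has_vector_derivative_eq_rhs[OF has_vector_derivative_mult[OF
          frob_inner.has_vector_derivative[OF dU dU] frob_inner.has_vector_derivative[OF dV dV]]])
      (use that in \<open>auto simp: D_def algebra_simps\<close>)
  then have "((\<lambda>s. 1 - 1 / of_nat N ^ 2 * (\<Sum>i=1..N. \<Sum>j=1..N.
        frob_inner (U i s) (U j s) * frob_inner (V i s) (V j s))) has_vector_derivative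
      0 - 1 / of_nat N ^ 2 * (\<Sum>i=1..N. \<Sum>j=1..N. D i j)) (at t within S)"
    by (intro has_vector_derivative_diff has_vector_derivative_const
        has_vector_derivative_mult_right has_vector_derivative_sum) auto
  then show ?thesis
    unfolding energy_def D_def by simp
qed

theorem mainTheorem12:
  fixes N :: nat and \<kappa> :: real
    and U :: "nat \<Rightarrow> real \<Rightarrow> complex^'n^'n" and V :: "nat \<Rightarrow> real \<Rightarrow> complex^'m^'m"
    and U' :: "nat \<Rightarrow> real \<Rightarrow> complex^'n^'n" and V' :: "nat \<Rightarrow> real \<Rightarrow> complex^'m^'m"
  assumes N: "N \<ge> 1" and kappa: "\<kappa> > 0"
    and dU: "\<And>j s. j \<in> {1..N} \<Longrightarrow> s \<ge> 0 \<Longrightarrow> ((U j) has_vector_derivative U' j s) (at s within {0..})"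
    and dV: "\<And>j s. j \<in> {1..N} \<Longrightarrow> s \<ge> 0 \<Longrightarrow> ((V j) has_vector_derivative V' j s) (at s within {0..})"
    and eqU: "\<And>j s. j \<in> {1..N} \<Longrightarrow> s \<ge> 0 \<Longrightarrow> U' j s =
        csmult (of_real (\<kappa> / real N))
          (\<Sum>k=1..N. csmult (frob_inner (V j s) (V k s)) (U k s)
                    - csmult (frob_inner (V k s) (V j s)) (U j s ** adj (U k s) ** U j s))"
    and eqV: "\<And>j s. j \<in> {1..N} \<Longrightarrow> s \<ge> 0 \<Longrightarrow> V' j s =
        csmult (of_real (\<kappa> / real N))
          (\<Sum>k=1..N. csmult (frob_inner (U j s) (U k s)) (V k s)
                    - csmult (frob_inner (U k s) (U j s)) (V j s ** adj (V k s) ** V j s))"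
    and init: "\<And>j. j \<in> {1..N} \<Longrightarrow> unitary (U j 0) \<and> unitary (V j 0)"
    and t: "t > 0"
  shows "((\<lambda>s. energy N (\<lambda>i. U i s) (\<lambda>i. V i s)) has_vector_derivative
          of_real (- (1 / (\<kappa> * real N)) *
             (\<Sum>j=1..N. frob_norm (U' j t) ^ 2 + frob_norm (V' j t) ^ 2))) (at t)"
proof -
  define SU where "SU = (\<Sum>j=1..N. norm (U' j t) ^ 2)"
  define SV where "SV = (\<Sum>j=1..N. norm (V' j t) ^ 2)"
  have c: "\<kappa> / real N > 0"
    using N kappa by simp
  have cont: "continuous_on {0..} (\<lambda>s. frob_inner (X i s) (X j s))"
    if "\<And>j s. j \<in> {1..N} \<Longrightarrow> s \<ge> 0 \<Longrightarrow> (X j has_vector_derivative X' j s) (at s within {0..})"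
      "i \<in> {1..N}" "j \<in> {1..N}"
    for X X' :: "nat \<Rightarrow> real \<Rightarrow> complex^'k^'k" and i j
    using that by (intro frob_inner.continuous_on continuous_on_vector_derivative) auto
  have U_part: "(\<Sum>i=1..N. \<Sum>j=1..N. (frob_inner (U i t) (U' j t) + frob_inner (U' i t) (U j t))
      * frob_inner (V i t) (V j t)) = of_real (SU / (\<kappa> / real N))"
    unfolding SU_def
    by (rule sum_frob_inner_derivative_tangent_flow[OF c _ cont[OF dV] dU eqU])
      (use init t in \<open>auto simp: cnj_frob_inner\<close>)
  have V_part: "(\<Sum>i=1..N. \<Sum>j=1..N. (frob_inner (V i t) (V' j t) + frob_inner (V' i t) (V j t))
      * frob_inner (U i t) (U j t)) = of_real (SV / (\<kappa> / real N))"
    unfolding SV_def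
    by (rule sum_frob_inner_derivative_tangent_flow[OF c _ cont[OF dU] dV eqV])
      (use init t in \<open>auto simp: cnj_frob_inner\<close>)
  have "((\<lambda>s. energy N (\<lambda>i. U i s) (\<lambda>i. V i s)) has_vector_derivative
      - (1 / of_nat N ^ 2) * (of_real (SU / (\<kappa> / real N)) + of_real (SV / (\<kappa> / real N))))
      (at t within {0..})"
    using energy_has_vector_derivative[of N U "\<lambda>j. U' j t" t "{0..}" V "\<lambda>j. V' j t"] dU dV t
    unfolding sum.distrib U_part V_part by simp
  moreover have "at t within {0..} = at t"
    using t by (intro at_within_interior) simp
  moreover have "- (1 / of_nat N ^ 2) * (of_real (SU / (\<kappa> / real N)) + of_real (SV / (\<kappa> / real N)))
      = (of_real (- (1 / real N ^ 2) * ((SU + SV) / (\<kappa> / real N))) :: complex)"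
    by (simp add: add_divide_distrib algebra_simps)
  moreover have "- (1 / real N ^ 2) * ((SU + SV) / (\<kappa> / real N))
      = - (1 / (\<kappa> * real N)) * (SU + SV)"
    using N kappa by (simp add: field_simps power2_eq_square)
  moreover have "(\<Sum>j=1..N. frob_norm (U' j t) ^ 2 + frob_norm (V' j t) ^ 2) = SU + SV"
    by (simp add: frob_norm_eq_norm sum.distrib SU_def SV_def)
  ultimately show ?thesis
    by (simp only:)
qed

end
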